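(* If $\lambda$ is a singular cardinal and $\clubsuit\square_\lambda$ holds, then $2^\lambda=\lambda^+$.
   Context: For a set of ordinals $A$: $\operatorname{acc}(A)=\{\alpha\in A:\sup(A\cap\alpha)=\alpha\}$; $\operatorname{otp}(A)$ is its order type; $A(i)$ is the unique $\beta\in A$ with $\operatorname{otp}(A\cap\beta)=i$. A $\square_\lambda$-sequence is $\langle C_\alpha:\alpha<\lambda^+\rangle$ such that for every limit $\alpha<\lambda^+$, $C_\alpha$ is a club in $\alpha$ of order type $\le\lambda$, and $\beta\in\operatorname{acc}(C_\alpha)$ implies $C_\beta=C_\alpha\cap\beta$. $\clubsuit\square_\lambda$ asserts the existence of a $\square_\lambda$-sequence $\langle C_\alpha\rangle$ such that for every sequence $\langle A_i:i<\lambda\rangle$ of unbounded subsets of $\lambda^+$, every limit $\theta<\lambda$ and every club $D\subseteq\lambda^+$, there is $\alpha<\lambda^+$ with $\operatorname{otp}(C_\alpha)=\theta$ such that for all $i<\theta$: $C_\alpha(i+1)\in A_i$, and $C_\alpha(i)<\beta<C_\alpha(i+1)$ for some $\beta\in D$. *)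

theory Defs
  imports Main
begin

unbundle cardinal_syntax

(* Ordinals below a cardinal are modelled as elements of the field of a well-order.
   lam :: 'a rel is a cardinal (card_order, field UNIV); lambda^+ is  cardSuc lam. *)

definition ltW :: "'a rel \<Rightarrow> 'a \<Rightarrow> 'a \<Rightarrow> bool" where
  "ltW W a b \<equiv> (a, b) \<in> W \<and> a \<noteq> b"

definition is_limit :: "'a rel \<Rightarrow> 'a \<Rightarrow> bool" where
  "is_limit W \<alpha> \<equiv> \<alpha> \<in> Field W \<and> (\<exists>\<gamma>. ltW W \<gamma> \<alpha>) \<and>
     (\<forall>\<gamma>. ltW W \<gamma> \<alpha> \<longrightarrow> (\<exists>\<delta>. ltW W \<gamma> \<delta> \<and> ltW W \<delta> \<alpha>))"

definition sup_eq :: "'a rel \<Rightarrow> 'a set \<Rightarrow> 'a \<Rightarrow> bool" where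
  "sup_eq W A \<alpha> \<equiv> \<forall>\<gamma>. ltW W \<gamma> \<alpha> \<longrightarrow> (\<exists>\<beta>\<in>A. ltW W \<gamma> \<beta> \<and> ltW W \<beta> \<alpha>)"

definition acc :: "'a rel \<Rightarrow> 'a set \<Rightarrow> 'a set" where
  "acc W A = {\<alpha> \<in> A. sup_eq W A \<alpha>}"

definition club_in :: "'a rel \<Rightarrow> 'a set \<Rightarrow> 'a \<Rightarrow> bool" where
  "club_in W C \<alpha> \<equiv> C \<subseteq> underS W \<alpha> \<and> (\<forall>\<gamma>. ltW W \<gamma> \<alpha> \<longrightarrow> (\<exists>\<beta>\<in>C. ltW W \<gamma> \<beta>)) \<and>
     (\<forall>\<gamma>. ltW W \<gamma> \<alpha> \<and> is_limit W \<gamma> \<and> sup_eq W C \<gamma> \<longrightarrow> \<gamma> \<in> C)"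

definition club :: "'a rel \<Rightarrow> 'a set \<Rightarrow> bool" where
  "club W D \<equiv> D \<subseteq> Field W \<and> (\<forall>\<gamma>\<in>Field W. \<exists>\<beta>\<in>D. ltW W \<gamma> \<beta>) \<and>
     (\<forall>\<gamma>\<in>Field W. is_limit W \<gamma> \<and> sup_eq W D \<gamma> \<longrightarrow> \<gamma> \<in> D)"

definition unbounded :: "'a rel \<Rightarrow> 'a set \<Rightarrow> bool" where
  "unbounded W A \<equiv> A \<subseteq> Field W \<and> (\<forall>\<gamma>\<in>Field W. \<exists>\<beta>\<in>A. ltW W \<gamma> \<beta>)"

(* C(i): the unique \<beta> \<in> C with otp(C \<inter> \<beta>) = i, where i is an ordinal of the well-order lam *)
definition nth_elem :: "'b rel \<Rightarrow> 'a rel \<Rightarrow> 'b set \<Rightarrow> 'a \<Rightarrow> 'b" where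
  "nth_elem W lam C i = (THE \<beta>. \<beta> \<in> C \<and> Restr W (C \<inter> underS W \<beta>) =o Restr lam (underS lam i))"

definition osucc :: "'a rel \<Rightarrow> 'a \<Rightarrow> 'a" where
  "osucc lam i = wo_rel.suc lam {i}"

definition square_seq :: "'a rel \<Rightarrow> ('a set \<Rightarrow> 'a set set) \<Rightarrow> bool" where
  "square_seq lam C \<equiv> \<forall>\<alpha>. is_limit (cardSuc lam) \<alpha> \<longrightarrow>
     club_in (cardSuc lam) (C \<alpha>) \<alpha> \<and> Restr (cardSuc lam) (C \<alpha>) \<le>o lam \<and>
     (\<forall>\<beta>\<in>acc (cardSuc lam) (C \<alpha>). C \<beta> = C \<alpha> \<inter> underS (cardSuc lam) \<beta>)"

definition clubsuit_square :: "'a rel \<Rightarrow> bool" where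
  "clubsuit_square lam \<equiv> \<exists>C. square_seq lam C \<and>
     (\<forall>(A :: 'a \<Rightarrow> 'a set set) \<theta> D.
        (\<forall>i. unbounded (cardSuc lam) (A i)) \<and> is_limit lam \<theta> \<and> club (cardSuc lam) D \<longrightarrow>
        (\<exists>\<alpha>\<in>Field (cardSuc lam).
           Restr (cardSuc lam) (C \<alpha>) =o Restr lam (underS lam \<theta>) \<and>
           (\<forall>i. ltW lam i \<theta> \<longrightarrow>
              nth_elem (cardSuc lam) lam (C \<alpha>) (osucc lam i) \<in> A i \<and>
              (\<exists>\<beta>\<in>D. ltW (cardSuc lam) (nth_elem (cardSuc lam) lam (C \<alpha>) i) \<beta> \<and>
                       ltW (cardSuc lam) \<beta> (nth_elem (cardSuc lam) lam (C \<alpha>) (osucc lam i))))))"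

end

theory Submission
  imports Defs
begin

(* Write L = cardSuc lam (that is, lambda^+) and F = Field L.
   (1) The guessing half of clubsuit_square alone already gives
       |F^theta| <= |F| for every limit ordinal theta < lam: split F into |F| many
       pairwise disjoint unbounded sets B(xi); a sequence f : theta -> F is coded by an
       alpha whose ladder C(alpha) satisfies C(alpha)(i+1) \<in> B(f i) for all i < theta,
       and disjointness makes f \<mapsto> alpha injective.
   (2) Since lam is singular it is uncountable, so every set S with |S| < lam embeds
       into some limit theta < lam; hence |F^S| <= |F| and |Pow S| <= |F|.
   (3) Singularity also yields a cofinal set K with |K| < lam.  A subset X of lam is
       determined by its initial segments X \<inter> k (k \<in> K), each coded by an element of F,
       so |Pow lam| <= |F^K| <= |F| = lambda^+.  The converse bound lambda^+ <= 2^lambda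
       is Cantor's theorem together with minimality of cardSuc. *)

lemma ltW_iff_underS: "ltW W a b \<longleftrightarrow> a \<in> underS W b"
  unfolding ltW_def underS_def by blast

lemma Field_Restr_underS:
  assumes "Well_order r"
  shows "Field (Restr r (underS r a)) = underS r a"
  using assms wo_rel.underS_ofilter Field_Restr_ofilter unfolding wo_rel_def by fastforce

lemma card_of_Func_mono:
  assumes base: "f1 ` A1 = B1" "B1 \<noteq> {}"
    and exponent: "inj_on f2 B2" "f2 ` B2 \<subseteq> A2"
  shows "|Func B2 B1| \<le>o |Func A2 A1|"
proof (cases "B2 = {}")
  case True
  have "Func A2 A1 \<noteq> {}" using base Func_non_emp by blast
  thus ?thesis using True Func_empty card_of_singl_ordLeq by metis
next
  case False
  have "Func B2 B1 = Func_map B2 f1 f2 ` Func A2 A1"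
    using Func_map_surj[OF base(1) exponent] False by blast
  thus ?thesis using surj_imp_ordLeq by (metis order_refl)
qed

lemma unbounded_if_full_size:
  assumes L: "Card_order L" and inf: "\<not> finite (Field L)"
    and S: "S \<subseteq> Field L" and big: "|Field L| \<le>o |S|"
  shows "unbounded L S"
  unfolding unbounded_def
proof (intro conjI ballI)
  show "S \<subseteq> Field L" by fact
  fix \<gamma> assume \<gamma>: "\<gamma> \<in> Field L"
  obtain \<gamma>' where \<gamma>': "\<gamma>' \<in> Field L" "ltW L \<gamma> \<gamma>'"
    using infinite_Card_order_limit[OF L inf \<gamma>] unfolding ltW_def by blast
  have wo: "wo_rel L" using L unfolding card_order_on_def wo_rel_def by blast
  show "\<exists>\<beta>\<in>S. ltW L \<gamma> \<beta>"
  proof (rule ccontr)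
    assume "\<not> (\<exists>\<beta>\<in>S. ltW L \<gamma> \<beta>)"
    hence "S \<subseteq> underS L \<gamma>'"
      using S \<gamma> \<gamma>' wo_rel.TOTALS[OF wo] wo_rel.TRANS[OF wo] wo_rel.ANTISYM[OF wo]
      unfolding ltW_def underS_def trans_def antisym_def by blast
    hence "|S| \<le>o |underS L \<gamma>'|" by (rule card_of_mono1)
    also have "|underS L \<gamma>'| <o L" using card_of_underS[OF L \<gamma>'(1)] .
    also have "L =o |Field L|" using card_of_Field_ordIso[OF L] ordIso_symmetric by blast
    finally show False using big not_ordLess_ordLeq by blast
  qed
qed

(* An infinite cardinal order kappa contains kappa many pairwise disjoint unbounded
   sets: the images of the rows {xi} x kappa under an injection kappa x kappa -> kappa. *)
lemma disjoint_unbounded_family: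
  assumes L: "Card_order L" and inf: "\<not> finite (Field L)"
  obtains B where "\<And>\<xi>. \<xi> \<in> Field L \<Longrightarrow> unbounded L (B \<xi>)"
    and "\<And>\<xi> \<xi>' x. \<lbrakk>\<xi> \<in> Field L; \<xi>' \<in> Field L; x \<in> B \<xi>; x \<in> B \<xi>'\<rbrakk> \<Longrightarrow> \<xi> = \<xi>'"
proof -
  let ?F = "Field L"
  have "|?F \<times> ?F| \<le>o |?F|"
    using Card_order_Times_same_infinite[OF L inf] card_of_Field_ordIso[OF L]
      ordLeq_ordIso_trans ordIso_symmetric by blast
  then obtain g where g: "inj_on g (?F \<times> ?F)" "g ` (?F \<times> ?F) \<subseteq> ?F"
    unfolding card_of_ordLeq[symmetric] by blast
  show thesis
  proof
    fix \<xi> assume \<xi>: "\<xi> \<in> ?F"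
    have "inj_on (\<lambda>\<beta>. g (\<xi>, \<beta>)) ?F" "(\<lambda>\<beta>. g (\<xi>, \<beta>)) ` ?F \<subseteq> g ` ({\<xi>} \<times> ?F)"
      using g(1) \<xi> unfolding inj_on_def by auto
    hence "|?F| \<le>o |g ` ({\<xi>} \<times> ?F)|" using card_of_ordLeq by blast
    moreover have "g ` ({\<xi>} \<times> ?F) \<subseteq> ?F" using g(2) \<xi> by auto
    ultimately show "unbounded L (g ` ({\<xi>} \<times> ?F))"
      using unbounded_if_full_size[OF L inf] by blast
  next
    fix \<xi> \<xi>' x assume "\<xi> \<in> ?F" "\<xi>' \<in> ?F" "x \<in> g ` ({\<xi>} \<times> ?F)" "x \<in> g ` ({\<xi>'} \<times> ?F)"
    thus "\<xi> = \<xi>'" using g(1) unfolding inj_on_def by auto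
  qed
qed

(* A singular infinite cardinal is uncountable, since aleph_0 is regular. *)
lemma singular_uncountable:
  assumes lam: "Card_order lam" and inf: "\<not> finite (Field lam)" and sing: "\<not> regularCard lam"
  shows "|UNIV :: nat set| <o lam"
proof -
  have "|UNIV :: nat set| \<le>o lam"
    using inf infinite_iff_card_of_nat card_of_Field_ordIso[OF lam] ordLeq_ordIso_trans by blast
  moreover have "\<not> |UNIV :: nat set| =o lam"
  proof
    assume "|UNIV :: nat set| =o lam"
    hence "natLeq =o lam" using card_of_nat ordIso_symmetric ordIso_transitive by blast
    thus False using sing regularCard_ordIso natLeq_Cinfinite regularCard_natLeq by blast
  qed
  ultimately show ?thesis using ordLeq_iff_ordLess_or_ordIso by blast
qed

lemma singular_small_cofinal:
  assumes lam: "Card_order lam" and sing: "\<not> regularCard lam"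
  obtains K where "cofinal K lam" "|K| <o lam"
proof -
  obtain K where K: "K \<subseteq> Field lam" "cofinal K lam" "\<not> |K| =o lam"
    using sing unfolding regularCard_def by blast
  have "|K| \<le>o lam"
    using card_of_mono1[OF K(1)] card_of_Field_ordIso[OF lam] ordLeq_ordIso_trans by blast
  thus thesis using that K(2,3) ordLeq_iff_ordLess_or_ordIso by blast
qed

(* Below an uncountable cardinal, every smaller set embeds into the predecessors of a
   limit ordinal theta: take theta to be the order type of S + omega. *)
lemma small_set_below_limit:
  fixes lam :: "'a rel" and S :: "'b set"
  assumes lam: "Card_order lam" and inf: "\<not> finite (Field lam)"
    and unc: "|UNIV :: nat set| <o lam" and S: "|S| <o lam"
  obtains \<theta> where "is_limit lam \<theta>" "|S| \<le>o |underS lam \<theta>|"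
proof -
  let ?T = "S <+> (UNIV :: nat set)"
  have wo: "Well_order lam" using lam unfolding card_order_on_def by blast
  have "|?T| <o lam" using card_of_Plus_ordLess_infinite_Field[OF inf lam S unc] .
  then obtain \<theta> where \<theta>: "\<theta> \<in> Field lam" "|?T| =o Restr lam (underS lam \<theta>)"
    using ordLess_iff_ordIso_Restr[OF wo card_of_Well_order] by blast
  let ?R = "Restr lam (underS lam \<theta>)"
  have FR: "Field ?R = underS lam \<theta>" using Field_Restr_underS[OF wo] .
  have CR: "Card_order ?R" using \<theta>(2) ordIso_card_of_imp_Card_order ordIso_symmetric by blast
  have "|?T| =o |underS lam \<theta>|" using card_of_cong[OF \<theta>(2)] FR by (simp add: Field_card_of)
  hence TU: "|?T| \<le>o |underS lam \<theta>|" using ordIso_iff_ordLeq by blast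
  have "\<not> finite ?T" by (simp add: finite_Plus_iff)
  hence infU: "\<not> finite (underS lam \<theta>)" using TU card_of_ordLeq_finite by blast
  have "is_limit lam \<theta>"
    unfolding is_limit_def
  proof (intro conjI allI impI)
    show "\<theta> \<in> Field lam" by fact
    obtain \<gamma> where "\<gamma> \<in> underS lam \<theta>" using infinite_imp_nonempty[OF infU] by blast
    thus "\<exists>\<gamma>. ltW lam \<gamma> \<theta>" unfolding ltW_iff_underS by blast
  next
    fix \<gamma> assume "ltW lam \<gamma> \<theta>"
    hence \<gamma>: "\<gamma> \<in> Field ?R" using FR by (simp add: ltW_iff_underS)
    obtain \<delta> where "\<delta> \<in> Field ?R" "\<gamma> \<noteq> \<delta>" "(\<gamma>, \<delta>) \<in> ?R"
      using infinite_Card_order_limit[OF CR _ \<gamma>] infU FR by auto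
    thus "\<exists>\<delta>. ltW lam \<gamma> \<delta> \<and> ltW lam \<delta> \<theta>" using FR unfolding ltW_iff_underS underS_def by blast
  qed
  moreover have "|S| \<le>o |underS lam \<theta>|" using card_of_Plus1 TU ordLeq_transitive by blast
  ultimately show thesis by (rule that)
qed

(* A set is determined by its traces on the initial segments below a cofinal set K, so
   |Pow (Field r)| <= |Y^K| as soon as each initial segment has at most |Y| subsets. *)
lemma Pow_le_Func_cofinal:
  assumes cof: "cofinal K r" and small: "\<And>k. k \<in> K \<Longrightarrow> |Pow (underS r k)| \<le>o |Y|"
  shows "|Pow (Field r)| \<le>o |Func K Y|"
proof -
  have "\<forall>k\<in>K. \<exists>c. inj_on c (Pow (underS r k)) \<and> c ` Pow (underS r k) \<subseteq> Y"
    using small unfolding card_of_ordLeq[symmetric] by blast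
  then obtain c where c: "\<And>k. k \<in> K \<Longrightarrow> inj_on (c k) (Pow (underS r k))"
    "\<And>k. k \<in> K \<Longrightarrow> c k ` Pow (underS r k) \<subseteq> Y"
    using bchoice[of K] by metis
  define trace where "trace X k = (if k \<in> K then c k (X \<inter> underS r k) else undefined)" for X k
  have "inj_on trace (Pow (Field r))"
  proof (rule inj_onI)
    fix X X' assume X: "X \<in> Pow (Field r)" and X': "X' \<in> Pow (Field r)" and eq: "trace X = trace X'"
    have segments: "X \<inter> underS r k = X' \<inter> underS r k" if "k \<in> K" for k
      using c(1)[OF that] fun_cong[OF eq, of k] that unfolding trace_def inj_on_def by auto
    show "X = X'"
    proof (intro equalityI subsetI)
      fix a assume "a \<in> X"
      moreover obtain k where "k \<in> K" "a \<in> underS r k"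
        using cof \<open>a \<in> X\<close> X unfolding cofinal_def underS_def by blast
      ultimately show "a \<in> X'" using segments by blast
    next
      fix a assume "a \<in> X'"
      moreover obtain k where "k \<in> K" "a \<in> underS r k"
        using cof \<open>a \<in> X'\<close> X' unfolding cofinal_def underS_def by blast
      ultimately show "a \<in> X" using segments by blast
    qed
  qed
  moreover have "trace ` Pow (Field r) \<subseteq> Func K Y"
    using c(2) unfolding trace_def Func_def image_subset_iff by auto
  ultimately show ?thesis using card_of_ordLeq by blast
qed

(* The only consequence of clubsuit_square that is used: with the trivial club
   D = lambda^+, any theta-sequence of unbounded sets A i is hit by the successor
   points C(alpha)(i+1) of a single ladder. *)
lemma clubsuit_square_guessing:
  fixes lam :: "'a rel"
  assumes lam: "Card_order lam" and inf: "\<not> finite (Field lam)" and guessing: "clubsuit_square lam"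
  obtains C where "\<And>A \<theta>. \<lbrakk>\<And>i. unbounded (cardSuc lam) (A i); is_limit lam \<theta>\<rbrakk> \<Longrightarrow>
      \<exists>\<alpha>\<in>Field (cardSuc lam). \<forall>i. ltW lam i \<theta> \<longrightarrow>
        nth_elem (cardSuc lam) lam (C \<alpha>) (osucc lam i) \<in> A i"
proof -
  let ?L = "cardSuc lam"
  have L: "Card_order ?L" using cardSuc_Card_order[OF lam] .
  have "unbounded ?L (Field ?L)"
    using unbounded_if_full_size[OF L _ subset_refl card_of_mono1[OF subset_refl]]
      inf cardSuc_finite[OF lam] by blast
  hence "club ?L (Field ?L)" unfolding club_def unbounded_def by blast
  thus thesis using that guessing unfolding clubsuit_square_def by metis
qed

(* The heart of the argument: a sequence f of length theta (theta < lam a limit) of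
   ordinals below lambda^+ is coded by an alpha whose ladder satisfies
   C(alpha)(i+1) \<in> B(f i) for a disjoint unbounded family B; hence
   (lambda^+)^theta = lambda^+. *)
lemma clubsuit_square_Func_limit:
  fixes lam :: "'a rel"
  assumes lam: "Card_order lam" and inf: "\<not> finite (Field lam)"
    and guessing: "clubsuit_square lam" and \<theta>: "is_limit lam \<theta>"
  shows "|Func (underS lam \<theta>) (Field (cardSuc lam))| \<le>o |Field (cardSuc lam)|"
proof -
  let ?L = "cardSuc lam"
  let ?F = "Field ?L"
  let ?Seq = "Func (underS lam \<theta>) ?F"
  have L: "Card_order ?L" using cardSuc_Card_order[OF lam] .
  obtain B where unbB: "\<And>\<xi>. \<xi> \<in> ?F \<Longrightarrow> unbounded ?L (B \<xi>)"
    and disjB: "\<And>\<xi> \<xi>' x. \<lbrakk>\<xi> \<in> ?F; \<xi>' \<in> ?F; x \<in> B \<xi>; x \<in> B \<xi>'\<rbrakk> \<Longrightarrow> \<xi> = \<xi>'"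
    using disjoint_unbounded_family[OF L] inf cardSuc_finite[OF lam] by metis
  have unbF: "unbounded ?L ?F"
    using unbounded_if_full_size[OF L _ subset_refl card_of_mono1[OF subset_refl]]
      inf cardSuc_finite[OF lam] by blast
  obtain C where C: "\<And>A \<theta>. \<lbrakk>\<And>i. unbounded ?L (A i); is_limit lam \<theta>\<rbrakk> \<Longrightarrow>
      \<exists>\<alpha>\<in>?F. \<forall>i. ltW lam i \<theta> \<longrightarrow> nth_elem ?L lam (C \<alpha>) (osucc lam i) \<in> A i"
    using clubsuit_square_guessing[OF lam inf guessing] by blast
  have "\<exists>\<alpha>\<in>?F. \<forall>i. ltW lam i \<theta> \<longrightarrow> nth_elem ?L lam (C \<alpha>) (osucc lam i) \<in> B (f i)"
    if f: "f \<in> ?Seq" for f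
  proof -
    define A where "A i = (if ltW lam i \<theta> then B (f i) else ?F)" for i
    have "unbounded ?L (A i)" for i
    proof (cases "ltW lam i \<theta>")
      case True
      hence "f i \<in> ?F" using f unfolding Func_def ltW_iff_underS by blast
      thus ?thesis using True unbB unfolding A_def by simp
    next
      case False
      thus ?thesis using unbF unfolding A_def by simp
    qed
    thus ?thesis using C[of A \<theta>] \<theta> unfolding A_def by auto
  qed
  then obtain code where code: "\<And>f. f \<in> ?Seq \<Longrightarrow> code f \<in> ?F"
    "\<And>f i. \<lbrakk>f \<in> ?Seq; ltW lam i \<theta>\<rbrakk> \<Longrightarrow> nth_elem ?L lam (C (code f)) (osucc lam i) \<in> B (f i)"
    using bchoice[of ?Seq] by metis
  have "inj_on code ?Seq"
  proof (rule inj_onI, rule ext)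
    fix f f' i assume f: "f \<in> ?Seq" and f': "f' \<in> ?Seq" and eq: "code f = code f'"
    show "f i = f' i"
    proof (cases "ltW lam i \<theta>")
      case True
      thus ?thesis using code(2)[OF f True] code(2)[OF f' True] eq disjB f f'
        unfolding Func_def ltW_iff_underS by auto
    next
      case False
      thus ?thesis using f f' unfolding Func_def ltW_iff_underS by auto
    qed
  qed
  thus ?thesis using code(1) card_of_ordLeq by blast
qed

(* Consequently (lambda^+)^S = lambda^+ for every |S| < lam, provided lam is
   uncountable, so that S fits below a limit ordinal. *)
lemma clubsuit_square_Func_small:
  fixes lam :: "'a rel" and S :: "'b set"
  assumes lam: "Card_order lam" and inf: "\<not> finite (Field lam)"
    and unc: "|UNIV :: nat set| <o lam" and guessing: "clubsuit_square lam" and S: "|S| <o lam"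
  shows "|Func S (Field (cardSuc lam))| \<le>o |Field (cardSuc lam)|"
proof -
  let ?F = "Field (cardSuc lam)"
  obtain \<theta> where \<theta>: "is_limit lam \<theta>" "|S| \<le>o |underS lam \<theta>|"
    using small_set_below_limit[OF lam inf unc S] .
  then obtain e where e: "inj_on e S" "e ` S \<subseteq> underS lam \<theta>"
    unfolding card_of_ordLeq[symmetric] by blast
  have "|Func S ?F| \<le>o |Func (underS lam \<theta>) ?F|"
    using card_of_Func_mono[of id ?F ?F e S] Field_cardSuc_not_empty[OF lam] e by simp
  also have "|Func (underS lam \<theta>) ?F| \<le>o |?F|"
    using clubsuit_square_Func_limit[OF lam inf guessing \<theta>(1)] .
  finally show ?thesis .
qed

(* Likewise 2^S <= lambda^+ for every |S| < lam, as 2^S <= (lambda^+)^S. *)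
lemma clubsuit_square_Pow_small:
  fixes lam :: "'a rel" and S :: "'b set"
  assumes lam: "Card_order lam" and inf: "\<not> finite (Field lam)"
    and unc: "|UNIV :: nat set| <o lam" and guessing: "clubsuit_square lam" and S: "|S| <o lam"
  shows "|Pow S| \<le>o |Field (cardSuc lam)|"
proof -
  let ?F = "Field (cardSuc lam)"
  have infF: "\<not> finite ?F" using inf cardSuc_finite[OF lam] by blast
  then obtain x0 where x0: "x0 \<in> ?F" using infinite_imp_nonempty by blast
  obtain x1 where x1: "x1 \<in> ?F - {x0}" using infinite_imp_nonempty[OF infinite_remove[OF infF]] by blast
  have "(\<lambda>x. x = x1) ` ?F = UNIV"
  proof (rule sym, rule UNIV_eq_I)
    fix b :: bool show "b \<in> (\<lambda>x. x = x1) ` ?F"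
      using x0 x1 by (cases b) auto
  qed
  hence "|Func S (UNIV :: bool set)| \<le>o |Func S ?F|"
    using card_of_Func_mono[of "\<lambda>x. x = x1" ?F UNIV id S S] by simp
  hence "|Pow S| \<le>o |Func S ?F|" using card_of_Pow_Func ordIso_ordLeq_trans by blast
  thus ?thesis
    using clubsuit_square_Func_small[OF lam inf unc guessing S] ordLeq_transitive by blast
qed

theorem proposition3p4:
  fixes lam :: "'a rel"
  assumes "card_order lam"
    and "\<not> finite (UNIV :: 'a set)"
    and "\<not> regularCard lam"
    and "clubsuit_square lam"
  shows "(card_of (Pow (UNIV :: 'a set)), cardSuc lam) \<in> ordIso"
proof -
  have lam: "Card_order lam" and Field_lam: "Field lam = UNIV"
    using card_order_on_Card_order[OF assms(1)] by auto
  have inf: "\<not> finite (Field lam)" using Field_lam assms(2) by simp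
  have unc: "|UNIV :: nat set| <o lam" using singular_uncountable[OF lam inf assms(3)] .
  obtain K where K: "cofinal K lam" "|K| <o lam"
    using singular_small_cofinal[OF lam assms(3)] .
  have segments: "|Pow (underS lam k)| \<le>o |Field (cardSuc lam)|" for k
    using clubsuit_square_Pow_small[OF lam inf unc assms(4)] card_of_underS[OF lam] Field_lam
    by blast
  have "|Pow (UNIV :: 'a set)| \<le>o |Func K (Field (cardSuc lam))|"
    using Pow_le_Func_cofinal[OF K(1) segments] Field_lam by simp
  also have "|Func K (Field (cardSuc lam))| \<le>o |Field (cardSuc lam)|"
    using clubsuit_square_Func_small[OF lam inf unc assms(4) K(2)] .
  also have "|Field (cardSuc lam)| =o cardSuc lam"
    using card_of_Field_ordIso[OF cardSuc_Card_order[OF lam]] .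
  finally have upper: "|Pow (UNIV :: 'a set)| \<le>o cardSuc lam" .
  have "lam <o |Pow (UNIV :: 'a set)|"
    using card_of_Pow[of "UNIV :: 'a set"] card_of_Field_ordIso[OF lam] Field_lam
      ordIso_ordLess_trans ordIso_symmetric by fastforce
  hence lower: "cardSuc lam \<le>o |Pow (UNIV :: 'a set)|"
    using cardSuc_least[OF lam card_of_Card_order] by blast
  show ?thesis using upper lower ordIso_iff_ordLeq by blast
qed

end
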